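(* Let $2\leq k<n$, let $K\subset\mathbb{C}^n$ be a convex body and let $p_0$ be a point in the interior of $K$. If for every complex $k$-dimensional affine subspace $P$ through $p_0$ the section $P\cap K$ is a (complex, $k$-dimensional) ellipsoid in $P$, then $K$ is an ellipsoid.
   Context: A convex body is a compact convex subset of $\mathbb{C}^n$ with nonempty interior. A (complex) ellipsoid in a complex affine space of dimension $m$ is the image of the closed Euclidean unit ball of $\mathbb{C}^m$ under an injective complex affine map into that space. *)

theory Defs
  imports "HOL-Analysis.Analysis"
begin

text \<open>C^n is modelled as complex^'n with n = CARD('n). Complex scalar
multiplication is componentwise: c *s x.\<close>

definition convex_body :: "(complex^'n) set \<Rightarrow> bool" where
  "convex_body K \<longleftrightarrow> compact K \<and> convex K \<and> interior K \<noteq> {}"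

definition clin_comb :: "nat \<Rightarrow> (nat \<Rightarrow> complex^'n) \<Rightarrow> (nat \<Rightarrow> complex) \<Rightarrow> complex^'n" where
  "clin_comb m v z = (\<Sum>i<m. z i *s v i)"

definition clin_indep :: "nat \<Rightarrow> (nat \<Rightarrow> complex^'n) \<Rightarrow> bool" where
  "clin_indep m v \<longleftrightarrow> (\<forall>z. clin_comb m v z = 0 \<longrightarrow> (\<forall>i<m. z i = 0))"

definition complex_affine_subspace_through :: "nat \<Rightarrow> complex^'n \<Rightarrow> (complex^'n) set \<Rightarrow> bool" where
  "complex_affine_subspace_through m p P \<longleftrightarrow>
     (\<exists>v. clin_indep m v \<and> P = {p + clin_comb m v z | z. True})"

text \<open>C^m modelled as coefficient functions z :: nat => complex vanishing from m on.\<close>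
definition cspace :: "nat \<Rightarrow> (nat \<Rightarrow> complex) set" where
  "cspace m = {z. \<forall>i\<ge>m. z i = 0}"

definition cunit_ball :: "nat \<Rightarrow> (nat \<Rightarrow> complex) set" where
  "cunit_ball m = {z \<in> cspace m. (\<Sum>i<m. (cmod (z i))\<^sup>2) \<le> 1}"

text \<open>E is a complex ellipsoid in the m-dimensional complex affine space P:
  the image of the closed unit ball of C^m under an injective complex affine
  map C^m \<rightarrow> P (every complex affine map C^m \<rightarrow> C^n has the form
  z \<mapsto> a + sum z_i v_i).\<close>
definition complex_ellipsoid_in :: "nat \<Rightarrow> (complex^'n) set \<Rightarrow> (complex^'n) set \<Rightarrow> bool" where
  "complex_ellipsoid_in m P E \<longleftrightarrow>
     (\<exists>a v. let f = (\<lambda>z. a + clin_comb m v z) in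
        inj_on f (cspace m) \<and> f ` cspace m \<subseteq> P \<and> E = f ` cunit_ball m)"

definition complex_ellipsoid :: "(complex^'n) set \<Rightarrow> bool" where
  "complex_ellipsoid E \<longleftrightarrow> complex_ellipsoid_in CARD('n) UNIV E"

end

theory Submission
  imports Defs
begin

text \<open>For \<open>x \<noteq> 0\<close> the ellipsoidal section of any \<open>k\<close>-plane containing \<open>x\<close> shows that
  \<open>K \<inter> (p0 + \<real>x) = {p0 + t x | A(x) t\<^sup>2 + 2 B(x) t \<le> 1}\<close> with \<open>A(x) > 0\<close>, and these coefficients
  are unique. As \<open>k \<ge> 2\<close>, any two vectors lie in a common \<open>k\<close>-plane, and in the ball coordinates
  of its section \<open>A\<close> is a positive multiple of a Hermitian square norm and \<open>B\<close> is real-linear.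
  Polarization and the parallelogram law then make \<open>A\<close> a positive definite Hermitian form on
  all of \<open>\<complex>\<^sup>n\<close>, and in an \<open>A\<close>-orthonormal basis \<open>K = {p0 + x | A(x) + 2 B(x) \<le> 1}\<close> is a
  Euclidean ball, i.e.\ \<open>K\<close> is an ellipsoid.\<close>

lemma clin_comb_add: "clin_comb m v (\<lambda>i. z i + w i) = clin_comb m v z + clin_comb m v w"
  unfolding clin_comb_def by (simp add: vector_sadd_rdistrib sum.distrib)

lemma clin_comb_diff: "clin_comb m v (\<lambda>i. z i - w i) = clin_comb m v z - clin_comb m v w"
  unfolding clin_comb_def by (simp add: vec.scale_left_diff_distrib sum_subtractf)

lemma clin_comb_scale: "clin_comb m v (\<lambda>i. c * z i) = c *s clin_comb m v z"
  unfolding clin_comb_def by (simp add: vec.scale_sum_right vector_smult_assoc)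

lemma clin_comb_cong: "(\<And>i. i < m \<Longrightarrow> z i = w i) \<Longrightarrow> clin_comb m v z = clin_comb m v w"
  unfolding clin_comb_def by (rule sum.cong) auto

lemma clin_comb_zero [simp]: "clin_comb m v (\<lambda>i. 0) = 0"
  unfolding clin_comb_def by simp

lemma clin_comb_unit: "i < m \<Longrightarrow> clin_comb m v (\<lambda>l. if l = i then 1 else 0) = v i"
  unfolding clin_comb_def by (simp add: if_distrib[of "\<lambda>c. c *s _"] cong: if_cong)

lemma clin_comb_in_span: "clin_comb m v z \<in> vec.span (v ` {..<m})"
  unfolding clin_comb_def by (intro vec.span_sum vec.span_scale vec.span_base) auto

lemma clin_comb_restrict: "clin_comb m v (\<lambda>i. if i < m then z i else 0) = clin_comb m v z"
  by (rule clin_comb_cong) simp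

lemma clin_indep_inj_on:
  assumes "clin_indep m v" shows "inj_on v {..<m}"
proof (rule inj_onI, rule ccontr)
  fix i j assume ij: "i \<in> {..<m}" "j \<in> {..<m}" "v i = v j" "i \<noteq> j"
  define z where "z = (\<lambda>l. if l = i then 1 else if l = j then -1 else (0::complex))"
  have "clin_comb m v z = (\<Sum>l\<in>{i,j}. z l *s v l)"
    unfolding clin_comb_def using ij by (intro sum.mono_neutral_right) (auto simp: z_def)
  also have "\<dots> = 0" using ij by (simp add: z_def)
  finally have "z i = 0" using assms ij unfolding clin_indep_def by blast
  then show False by (simp add: z_def)
qed

lemma clin_indep_iff_independent:
  "clin_indep m v \<longleftrightarrow> inj_on v {..<m} \<and> vec.independent (v ` {..<m})"
proof
  assume ind: "clin_indep m v"
  have inj: "inj_on v {..<m}" by (rule clin_indep_inj_on[OF ind])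
  moreover have "vec.independent (v ` {..<m})"
    unfolding vec.independent_explicit
  proof (intro conjI allI impI ballI)
    fix c x assume h: "(\<Sum>w\<in>v ` {..<m}. c w *s w) = 0" and x: "x \<in> v ` {..<m}"
    have "clin_comb m v (\<lambda>i. c (v i)) = 0"
      using h unfolding clin_comb_def by (simp add: sum.reindex[OF inj])
    then show "c x = 0" using ind x unfolding clin_indep_def by blast
  qed simp
  ultimately show "inj_on v {..<m} \<and> vec.independent (v ` {..<m})" ..
next
  assume "inj_on v {..<m} \<and> vec.independent (v ` {..<m})"
  then have inj: "inj_on v {..<m}" and ind: "vec.independent (v ` {..<m})" by auto
  show "clin_indep m v"
    unfolding clin_indep_def
  proof (intro allI impI)
    fix z i assume h: "clin_comb m v z = 0" and i: "i < m"
    define c where "c = (\<lambda>w. z (the_inv_into {..<m} v w))"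
    have "(\<Sum>w\<in>v ` {..<m}. c w *s w) = clin_comb m v z"
      unfolding clin_comb_def c_def using inj by (simp add: sum.reindex the_inv_into_f_f)
    then have "c (v i) = 0" using ind h i unfolding vec.independent_explicit by auto
    then show "z i = 0" using inj i by (simp add: c_def the_inv_into_f_f)
  qed
qed

lemma clin_indep_scale:
  assumes "clin_indep m v" and "c \<noteq> 0"
  shows "clin_indep m (\<lambda>i. c *s v i)"
  unfolding clin_indep_def
proof (intro allI impI)
  fix z i assume "clin_comb m (\<lambda>i. c *s v i) z = 0" and i: "i < m"
  then have "clin_comb m v (\<lambda>i. z i * c) = 0"
    by (simp add: clin_comb_def vector_smult_assoc)
  then show "z i = 0" using assms i unfolding clin_indep_def by auto
qed

lemma inj_on_affine_clin_comb:
  assumes "clin_indep m w"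
  shows "inj_on (\<lambda>z. a + clin_comb m w z) (cspace m)"
proof (rule inj_onI)
  fix z z' assume z: "z \<in> cspace m" "z' \<in> cspace m" and "a + clin_comb m w z = a + clin_comb m w z'"
  then have "clin_comb m w (\<lambda>i. z i - z' i) = 0" by (simp add: clin_comb_diff)
  then have "z i = z' i" if "i < m" for i
    using assms that unfolding clin_indep_def by auto
  moreover have "z i = z' i" if "\<not> i < m" for i using z that by (simp add: cspace_def)
  ultimately show "z = z'" by blast
qed

lemma dim_span_clin_indep: "clin_indep m v \<Longrightarrow> vec.dim (vec.span (v ` {..<m})) = m"
  by (simp add: clin_indep_iff_independent vec.dim_eq_card_independent card_image)

lemma span_imp_clin_comb:
  assumes "inj_on v {..<m}" and "x \<in> vec.span (v ` {..<m})"
  obtains z where "x = clin_comb m v z"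
proof -
  obtain u where u: "x = (\<Sum>w\<in>v ` {..<m}. u w *s w)"
    using assms(2) vec.span_finite[of "v ` {..<m}"] by auto
  have "x = clin_comb m v (\<lambda>i. u (v i))"
    unfolding u clin_comb_def using assms(1) by (simp add: sum.reindex)
  then show ?thesis by (rule that)
qed

lemma dim_UNIV_cvec: "vec.dim (UNIV :: (complex^'n) set) = CARD('n)"
  by (simp add: card_cart_basis)

lemma clin_indep_CARD_imp_clin_comb:
  fixes v :: "nat \<Rightarrow> complex^'n"
  assumes "clin_indep CARD('n) v"
  obtains z where "x = clin_comb CARD('n) v z"
proof -
  have "UNIV \<subseteq> vec.span (v ` {..<CARD('n)})"
    using assms vec.card_eq_dim[of "v ` {..<CARD('n)}" UNIV] dim_UNIV_cvec[where 'n='n]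
    by (simp add: clin_indep_iff_independent card_image)
  then show ?thesis
    using span_imp_clin_comb[OF clin_indep_inj_on[OF assms], of x] that by blast
qed

lemma plane_through_two_vectors:
  fixes x y :: "complex^'n"
  assumes "2 \<le> k" "k \<le> CARD('n)"
  obtains v where "clin_indep k v" "x \<in> vec.span (v ` {..<k})" "y \<in> vec.span (v ` {..<k})"
proof -
  obtain B0 where B0: "B0 \<subseteq> {x,y}" "vec.independent B0" "{x,y} \<subseteq> vec.span B0"
    by (rule vec.maximal_independent_subset[of "{x,y}"])
  obtain B where B: "B0 \<subseteq> B" "vec.independent B" "UNIV \<subseteq> vec.span B"
    by (rule vec.maximal_independent_subset_extend[OF subset_UNIV B0(2)])
  have "vec.dim B = vec.dim (UNIV :: (complex^'n) set)"
    using B(3) vec.dim_span[of B] by (simp add: top.extremum_unique)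
  then have cardB: "card B = CARD('n)"
    using vec.dim_eq_card_independent[OF B(2)] dim_UNIV_cvec[where 'n='n] by simp
  have fin0: "finite B0" using B0(1) finite_subset by blast
  have "card B0 \<le> card {x,y}" using B0(1) by (intro card_mono) auto
  also have "\<dots> \<le> 2" by (cases "x = y") auto
  finally have card_B0: "card B0 \<le> 2" .
  then have "k - card B0 \<le> card (B - B0)"
    using card_Diff_subset[OF fin0 B(1)] cardB assms by simp
  then obtain T where T: "T \<subseteq> B - B0" "card T = k - card B0"
    by (rule obtain_subset_with_card_n)
  have finT: "finite T"
    using T(1) vec.finiteI_independent[OF B(2)] finite_subset by blast
  define C where "C = B0 \<union> T"
  have "card C = k"
    unfolding C_def using T fin0 finT card_B0 assms by (subst card_Un_disjoint) auto
  then obtain h where h: "bij_betw h {..<k} C"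
    using finite_same_card_bij[of "{..<k}" C] fin0 finT by (auto simp: C_def)
  have "C \<subseteq> B" using T B(1) by (auto simp: C_def)
  then have "clin_indep k h"
    using h vec.independent_mono[OF B(2)] by (auto simp: clin_indep_iff_independent bij_betw_def)
  moreover have "{x,y} \<subseteq> vec.span (h ` {..<k})"
    using B0(3) vec.span_mono[of B0 C] h by (auto simp: C_def bij_betw_def)
  ultimately show ?thesis using that by blast
qed

section \<open>Functions that are Hermitian forms on every complex plane\<close>

lemma polarization_sum:
  "(of_real (\<Sum>j<N. (cmod (u j + w j))\<^sup>2) - of_real (\<Sum>j<N. (cmod (u j - w j))\<^sup>2)
     + \<i> * (of_real (\<Sum>j<N. (cmod (u j + \<i> * w j))\<^sup>2) - of_real (\<Sum>j<N. (cmod (u j - \<i> * w j))\<^sup>2))) / 4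
   = (\<Sum>j<N. u j * cnj (w j))"
proof -
  have termwise: "of_real ((cmod (u j + w j))\<^sup>2) - of_real ((cmod (u j - w j))\<^sup>2)
     + \<i> * (of_real ((cmod (u j + \<i> * w j))\<^sup>2) - of_real ((cmod (u j - \<i> * w j))\<^sup>2))
     = 4 * (u j * cnj (w j))" for j
    unfolding cmod_power2 by (simp add: complex_eq_iff power2_eq_square algebra_simps)
  have real_part: "of_real (\<Sum>j<N. (cmod (u j + w j))\<^sup>2) - of_real (\<Sum>j<N. (cmod (u j - w j))\<^sup>2)
      = (\<Sum>j<N. of_real ((cmod (u j + w j))\<^sup>2) - of_real ((cmod (u j - w j))\<^sup>2))"
    by (simp only: of_real_sum sum_subtractf)
  have imag_part: "\<i> * (of_real (\<Sum>j<N. (cmod (u j + \<i> * w j))\<^sup>2) - of_real (\<Sum>j<N. (cmod (u j - \<i> * w j))\<^sup>2))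
      = (\<Sum>j<N. \<i> * (of_real ((cmod (u j + \<i> * w j))\<^sup>2) - of_real ((cmod (u j - \<i> * w j))\<^sup>2)))"
    by (simp only: of_real_sum sum_subtractf[symmetric] sum_distrib_left)
  have "of_real (\<Sum>j<N. (cmod (u j + w j))\<^sup>2) - of_real (\<Sum>j<N. (cmod (u j - w j))\<^sup>2)
     + \<i> * (of_real (\<Sum>j<N. (cmod (u j + \<i> * w j))\<^sup>2) - of_real (\<Sum>j<N. (cmod (u j - \<i> * w j))\<^sup>2))
     = (\<Sum>j<N. of_real ((cmod (u j + w j))\<^sup>2) - of_real ((cmod (u j - w j))\<^sup>2)
         + \<i> * (of_real ((cmod (u j + \<i> * w j))\<^sup>2) - of_real ((cmod (u j - \<i> * w j))\<^sup>2)))"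
    unfolding real_part imag_part by (rule sum.distrib[symmetric])
  also have "\<dots> = 4 * (\<Sum>j<N. u j * cnj (w j))"
    by (simp only: termwise sum_distrib_left)
  finally show ?thesis by simp
qed

locale planewise_hermitian =
  fixes q :: "complex^'n \<Rightarrow> real"
  assumes planewise_sum_squares:
    "\<And>x y. \<exists>(N::nat) p r. \<forall>\<alpha> \<beta>. q (\<alpha> *s x + \<beta> *s y) = (\<Sum>j<N. (cmod (\<alpha> * p j + \<beta> * r j))\<^sup>2)"
begin

lemma q_scale: "q (c *s x) = (cmod c)\<^sup>2 * q x"
proof -
  obtain N :: nat and p r where e: "\<And>\<alpha> \<beta>. q (\<alpha> *s x + \<beta> *s x) = (\<Sum>j<N. (cmod (\<alpha> * p j + \<beta> * r j))\<^sup>2)"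
    using planewise_sum_squares[of x x] by blast
  have "q (c *s x) = (\<Sum>j<N. (cmod (c * p j))\<^sup>2)" using e[of c 0] by simp
  also have "\<dots> = (cmod c)\<^sup>2 * (\<Sum>j<N. (cmod (p j))\<^sup>2)"
    by (simp add: norm_mult power_mult_distrib sum_distrib_left)
  also have "(\<Sum>j<N. (cmod (p j))\<^sup>2) = q x" using e[of 1 0] by simp
  finally show ?thesis .
qed

lemma q_parallelogram: "q (x + y) + q (x - y) = 2 * q x + 2 * q y"
proof -
  obtain N :: nat and p r where e: "\<And>\<alpha> \<beta>. q (\<alpha> *s x + \<beta> *s y) = (\<Sum>j<N. (cmod (\<alpha> * p j + \<beta> * r j))\<^sup>2)"
    using planewise_sum_squares[of x y] by blast
  have "(cmod (p j + r j))\<^sup>2 + (cmod (p j - r j))\<^sup>2 = 2 * (cmod (p j))\<^sup>2 + 2 * (cmod (r j))\<^sup>2" for j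
    unfolding cmod_power2 by (simp add: power2_eq_square algebra_simps)
  then show ?thesis
    using e[of 1 1] e[of 1 "-1"] e[of 1 0] e[of 0 1]
    by (simp add: sum.distrib sum_distrib_left flip: sum.distrib)
qed

lemma q_polar_double: "q (x + (y + y)) - q (x - (y + y)) = 2 * (q (x + y) - q (x - y))"
proof -
  obtain N :: nat and p r where e: "\<And>\<alpha> \<beta>. q (\<alpha> *s x + \<beta> *s y) = (\<Sum>j<N. (cmod (\<alpha> * p j + \<beta> * r j))\<^sup>2)"
    using planewise_sum_squares[of x y] by blast
  have vectors: "x + (y + y) = 1 *s x + 2 *s y" "x - (y + y) = 1 *s x + (- 2) *s y"
    "x + y = 1 *s x + 1 *s y" "x - y = 1 *s x + (- 1) *s y"
    by (simp_all add: vec_eq_iff)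
  have "(cmod (p j + 2 * r j))\<^sup>2 - (cmod (p j - 2 * r j))\<^sup>2
      = 2 * ((cmod (p j + r j))\<^sup>2 - (cmod (p j - r j))\<^sup>2)" for j
    unfolding cmod_power2 by (simp add: power2_eq_square algebra_simps)
  then show ?thesis
    unfolding vectors e by (simp add: sum_subtractf sum_distrib_left flip: sum_subtractf)
qed

text \<open>Additivity of the polarization would follow at once if three vectors always lay in a
  common plane on which \<open>q\<close> is Hermitian; since only pairs do, it is derived from the parallelogram
  law instead, as in the Jordan--von Neumann theorem.\<close>

lemma q_polar_add:
  "q ((x1 + x2) + y) - q ((x1 + x2) - y) = (q (x1 + y) - q (x1 - y)) + (q (x2 + y) - q (x2 - y))"
proof -
  have "q ((x1 + y) + (x2 + y)) + q ((x1 + y) - (x2 + y)) = 2 * q (x1 + y) + 2 * q (x2 + y)"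
    and "q ((x1 - y) + (x2 - y)) + q ((x1 - y) - (x2 - y)) = 2 * q (x1 - y) + 2 * q (x2 - y)"
    by (rule q_parallelogram)+
  moreover have "(x1 + y) + (x2 + y) = (x1 + x2) + (y + y)" "(x1 - y) + (x2 - y) = (x1 + x2) - (y + y)"
    "(x1 + y) - (x2 + y) = x1 - x2" "(x1 - y) - (x2 - y) = x1 - x2"
    by (simp_all add: algebra_simps)
  ultimately show ?thesis using q_polar_double[of "x1 + x2" y] by simp
qed

definition herm :: "complex^'n \<Rightarrow> complex^'n \<Rightarrow> complex" where
  "herm x y = (of_real (q (x + y)) - of_real (q (x - y))
     + \<i> * (of_real (q (x + \<i> *s y)) - of_real (q (x - \<i> *s y)))) / 4"

lemma herm_planewise:
  "\<exists>(N::nat) p r. \<forall>\<alpha> \<beta> \<gamma> \<delta>. herm (\<alpha> *s x + \<beta> *s y) (\<gamma> *s x + \<delta> *s y)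
    = (\<Sum>j<N. (\<alpha> * p j + \<beta> * r j) * cnj (\<gamma> * p j + \<delta> * r j))"
proof -
  obtain N :: nat and p r where e: "\<And>\<alpha> \<beta>. q (\<alpha> *s x + \<beta> *s y) = (\<Sum>j<N. (cmod (\<alpha> * p j + \<beta> * r j))\<^sup>2)"
    using planewise_sum_squares[of x y] by blast
  have "herm (\<alpha> *s x + \<beta> *s y) (\<gamma> *s x + \<delta> *s y)
    = (\<Sum>j<N. (\<alpha> * p j + \<beta> * r j) * cnj (\<gamma> * p j + \<delta> * r j))" for \<alpha> \<beta> \<gamma> \<delta>
  proof -
    have vectors:
      "(\<alpha> *s x + \<beta> *s y) + (\<gamma> *s x + \<delta> *s y) = (\<alpha> + \<gamma>) *s x + (\<beta> + \<delta>) *s y"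
      "(\<alpha> *s x + \<beta> *s y) - (\<gamma> *s x + \<delta> *s y) = (\<alpha> - \<gamma>) *s x + (\<beta> - \<delta>) *s y"
      "(\<alpha> *s x + \<beta> *s y) + \<i> *s (\<gamma> *s x + \<delta> *s y) = (\<alpha> + \<i> * \<gamma>) *s x + (\<beta> + \<i> * \<delta>) *s y"
      "(\<alpha> *s x + \<beta> *s y) - \<i> *s (\<gamma> *s x + \<delta> *s y) = (\<alpha> - \<i> * \<gamma>) *s x + (\<beta> - \<i> * \<delta>) *s y"
      by (simp_all add: vec_eq_iff algebra_simps)
    have coeffs:
      "(\<alpha> + \<gamma>) * p j + (\<beta> + \<delta>) * r j = (\<alpha> * p j + \<beta> * r j) + (\<gamma> * p j + \<delta> * r j)"
      "(\<alpha> - \<gamma>) * p j + (\<beta> - \<delta>) * r j = (\<alpha> * p j + \<beta> * r j) - (\<gamma> * p j + \<delta> * r j)"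
      "(\<alpha> + \<i> * \<gamma>) * p j + (\<beta> + \<i> * \<delta>) * r j = (\<alpha> * p j + \<beta> * r j) + \<i> * (\<gamma> * p j + \<delta> * r j)"
      "(\<alpha> - \<i> * \<gamma>) * p j + (\<beta> - \<i> * \<delta>) * r j = (\<alpha> * p j + \<beta> * r j) - \<i> * (\<gamma> * p j + \<delta> * r j)"
      for j by (simp_all add: algebra_simps)
    show ?thesis unfolding herm_def vectors e coeffs by (rule polarization_sum)
  qed
  then show ?thesis by blast
qed

lemma herm_add_left: "herm (x1 + x2) y = herm x1 y + herm x2 y"
  unfolding herm_def of_real_diff[symmetric] q_polar_add of_real_add by (simp add: field_simps)

lemma herm_scale_left: "herm (c *s x) y = c * herm x y"
proof -
  obtain N :: nat and p r where e: "\<And>\<alpha> \<beta> \<gamma> \<delta>. herm (\<alpha> *s x + \<beta> *s y) (\<gamma> *s x + \<delta> *s y)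
    = (\<Sum>j<N. (\<alpha> * p j + \<beta> * r j) * cnj (\<gamma> * p j + \<delta> * r j))"
    using herm_planewise[of x y] by blast
  show ?thesis
    using e[of c 0 0 1] e[of 1 0 0 1] by (simp add: sum_distrib_left algebra_simps)
qed

lemma herm_commute: "herm y x = cnj (herm x y)"
proof -
  obtain N :: nat and p r where e: "\<And>\<alpha> \<beta> \<gamma> \<delta>. herm (\<alpha> *s x + \<beta> *s y) (\<gamma> *s x + \<delta> *s y)
    = (\<Sum>j<N. (\<alpha> * p j + \<beta> * r j) * cnj (\<gamma> * p j + \<delta> * r j))"
    using herm_planewise[of x y] by blast
  show ?thesis
    using e[of 0 1 1 0] e[of 1 0 0 1] by (simp add: cnj_sum mult.commute)
qed

lemma herm_self: "herm x x = of_real (q x)"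
proof -
  have vectors: "x + x = 2 *s x" "x - x = 0 *s x" "x + \<i> *s x = (1 + \<i>) *s x"
    "x - \<i> *s x = (1 - \<i>) *s x"
    by (simp_all add: vec_eq_iff algebra_simps)
  have "(cmod (1 + \<i>))\<^sup>2 = 2" "(cmod (1 - \<i>))\<^sup>2 = 2"
    by (simp_all add: cmod_power2)
  then show ?thesis unfolding herm_def vectors q_scale by simp
qed

lemma herm_scale_right: "herm x (c *s y) = cnj c * herm x y"
  by (subst herm_commute) (simp add: herm_scale_left herm_commute[of x])

lemma herm_zero_left [simp]: "herm 0 y = 0"
  using herm_scale_left[of 0 0 y] by simp

lemma herm_diff_left: "herm (x1 - x2) y = herm x1 y - herm x2 y"
  using herm_add_left[of "x1 - x2" x2 y] by simp

lemma herm_sum_left: "finite S \<Longrightarrow> herm (\<Sum>i\<in>S. f i) y = (\<Sum>i\<in>S. herm (f i) y)"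
  by (induction S rule: finite_induct) (simp_all add: herm_add_left)

lemma herm_clin_comb_left: "herm (clin_comb m v z) y = (\<Sum>i<m. z i * herm (v i) y)"
  unfolding clin_comb_def by (simp add: herm_sum_left herm_scale_left)

lemma herm_clin_comb_right: "herm y (clin_comb m v z) = (\<Sum>i<m. cnj (z i) * herm y (v i))"
  by (subst herm_commute) (simp add: herm_clin_comb_left cnj_sum herm_commute[of y])

end

locale positive_planewise_hermitian = planewise_hermitian q for q :: "complex^'n \<Rightarrow> real" +
  assumes q_pos: "x \<noteq> 0 \<Longrightarrow> 0 < q x"
begin

definition orthonormal :: "nat \<Rightarrow> (nat \<Rightarrow> complex^'n) \<Rightarrow> bool" where
  "orthonormal m v \<longleftrightarrow> (\<forall>i<m. \<forall>l<m. herm (v i) (v l) = (if i = l then 1 else 0))"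

lemma orthonormal_coord:
  assumes "orthonormal m v" and "l < m"
  shows "herm (clin_comb m v z) (v l) = z l"
proof -
  have "herm (clin_comb m v z) (v l) = (\<Sum>i<m. z i * (if i = l then 1 else 0))"
    unfolding herm_clin_comb_left using assms unfolding orthonormal_def by (intro sum.cong) auto
  also have "\<dots> = z l" using assms(2) by (simp add: if_distrib cong: if_cong)
  finally show ?thesis .
qed

lemma orthonormal_imp_clin_indep: "orthonormal m v \<Longrightarrow> clin_indep m v"
  unfolding clin_indep_def using orthonormal_coord herm_zero_left by metis

lemma orthonormal_extend:
  assumes v: "orthonormal m v" and w: "w \<notin> vec.span (v ` {..<m})"
  obtains u where "orthonormal (Suc m) (v(m := u))"
proof -
  define d where "d = w - clin_comb m v (\<lambda>i. herm w (v i))"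
  have d_orth: "herm d (v l) = 0" "herm (v l) d = 0" if "l < m" for l
    using orthonormal_coord[OF v that] herm_commute[of "v l" d]
    by (simp_all add: d_def herm_diff_left)
  have "d \<noteq> 0" using w clin_comb_in_span by (metis d_def eq_iff_diff_eq_0)
  then have q_d: "0 < q d" by (rule q_pos)
  define u where "u = of_real (1 / sqrt (q d)) *s d"
  have "herm u u = 1"
    using q_d unfolding u_def herm_self q_scale by (simp add: norm_divide power_divide)
  moreover have "herm u (v l) = 0" "herm (v l) u = 0" if "l < m" for l
    using d_orth[OF that] by (simp_all add: u_def herm_scale_left herm_scale_right)
  ultimately have "orthonormal (Suc m) (v(m := u))"
    using v unfolding orthonormal_def by (auto simp: less_Suc_eq)
  then show ?thesis by (rule that)
qed

lemma orthonormal_exists: "m \<le> CARD('n) \<Longrightarrow> \<exists>v. orthonormal m v"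
proof (induction m)
  case 0
  then show ?case by (simp add: orthonormal_def)
next
  case (Suc m)
  then obtain v where v: "orthonormal m v" by auto
  have "vec.span (v ` {..<m}) \<noteq> UNIV"
  proof
    assume "vec.span (v ` {..<m}) = UNIV"
    then have "vec.dim (UNIV :: (complex^'n) set) = m"
      using dim_span_clin_indep[OF orthonormal_imp_clin_indep[OF v]] by metis
    then show False using Suc.prems dim_UNIV_cvec[where 'n='n] by simp
  qed
  then obtain w where "w \<notin> vec.span (v ` {..<m})" by blast
  then show ?case using orthonormal_extend[OF v] by metis
qed

lemma orthonormal_basis:
  obtains v :: "nat \<Rightarrow> complex^'n" where "clin_indep CARD('n) v"
    and "\<And>z. q (clin_comb CARD('n) v z) = (\<Sum>i<CARD('n). (cmod (z i))\<^sup>2)"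
proof -
  obtain v where v: "orthonormal CARD('n) v" using orthonormal_exists by blast
  have "q (clin_comb CARD('n) v z) = (\<Sum>i<CARD('n). (cmod (z i))\<^sup>2)" for z
  proof -
    have "of_real (q (clin_comb CARD('n) v z)) = (\<Sum>i<CARD('n). cnj (z i) * z i)"
      unfolding herm_self[symmetric] herm_clin_comb_right
      by (intro sum.cong) (simp_all add: orthonormal_coord[OF v])
    also have "\<dots> = of_real (\<Sum>i<CARD('n). (cmod (z i))\<^sup>2)"
      unfolding of_real_sum complex_norm_square by (simp add: mult.commute)
    finally show ?thesis by (simp only: of_real_eq_iff)
  qed
  then show ?thesis using that orthonormal_imp_clin_indep[OF v] by blast
qed

end

lemma planewise_real_linear:
  fixes l :: "complex^'n \<Rightarrow> real"
  assumes "\<And>x y. \<exists>a b. \<forall>\<alpha> \<beta>. l (\<alpha> *s x + \<beta> *s y) = Re (\<alpha> * a + \<beta> * b)"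
  shows "l (x + y) = l x + l y" and "l (of_real r *s x) = r * l x"
proof -
  obtain a b where e: "\<And>\<alpha> \<beta>. l (\<alpha> *s x + \<beta> *s y) = Re (\<alpha> * a + \<beta> * b)"
    using assms by blast
  show "l (x + y) = l x + l y" using e[of 1 1] e[of 1 0] e[of 0 1] by simp
  show "l (of_real r *s x) = r * l x" using e[of "of_real r" 0] e[of 1 0] by simp
qed

lemma planewise_real_linear_clin_comb:
  fixes l :: "complex^'n \<Rightarrow> real"
  assumes "\<And>x y. \<exists>a b. \<forall>\<alpha> \<beta>. l (\<alpha> *s x + \<beta> *s y) = Re (\<alpha> * a + \<beta> * b)"
  obtains c where "\<And>z. l (clin_comb m v z) = (\<Sum>i<m. Re (z i * cnj (c i)))"
proof -
  note linear = planewise_real_linear[OF assms]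
  have l_sum: "l (\<Sum>i\<in>S. f i) = (\<Sum>i\<in>S. l (f i))" if "finite S" for S and f :: "nat \<Rightarrow> complex^'n"
    using that by (induction S rule: finite_induct) (simp_all add: linear(1) linear(2)[of 0, simplified])
  define c where "c i = of_real (l (v i)) + \<i> * of_real (l (\<i> *s v i))" for i
  have "l (w *s v i) = Re (w * cnj (c i))" for w i
  proof -
    have "w *s v i = of_real (Re w) *s v i + of_real (Im w) *s (\<i> *s v i)"
      by (simp add: vec_eq_iff algebra_simps complex_eq_iff)
    then have "l (w *s v i) = Re w * l (v i) + Im w * l (\<i> *s v i)" by (simp only: linear)
    then show ?thesis by (simp add: c_def)
  qed
  then have "l (clin_comb m v z) = (\<Sum>i<m. Re (z i * cnj (c i)))" for z
    unfolding clin_comb_def by (simp add: l_sum)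
  then show ?thesis by (rule that)
qed

section \<open>Ellipsoids in coordinates\<close>

lemma complex_ellipsoid_if_ball_in_coords:
  fixes v :: "nat \<Rightarrow> complex^'n"
  assumes ind: "clin_indep CARD('n) v" and R: "0 < R"
    and K: "\<And>z. p + clin_comb CARD('n) v z \<in> K \<longleftrightarrow> (\<Sum>i<CARD('n). (cmod (z i + c i))\<^sup>2) \<le> R\<^sup>2"
  shows "complex_ellipsoid K"
proof -
  define n where "n = CARD('n)"
  define f where "f \<zeta> = p + clin_comb n v (\<lambda>i. of_real R * \<zeta> i - c i)" for \<zeta>
  have f_affine: "f = (\<lambda>\<zeta>. (p - clin_comb n v c) + clin_comb n (\<lambda>i. of_real R *s v i) \<zeta>)"
    by (auto simp: f_def clin_comb_diff clin_comb_def mult.commute)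
  have "inj_on f (cspace n)"
    unfolding f_affine using clin_indep_scale[OF ind, of "of_real R"] R
    by (intro inj_on_affine_clin_comb) (simp add: n_def)
  moreover have "K = f ` cunit_ball n"
  proof (intro equalityI subsetI)
    fix x assume "x \<in> K"
    obtain z where "x - p = clin_comb n v z"
      using clin_indep_CARD_imp_clin_comb[OF ind] unfolding n_def by blast
    then have z: "x = p + clin_comb n v z" by (simp add: algebra_simps)
    define \<zeta> where "\<zeta> i = (if i < n then (z i + c i) / of_real R else 0)" for i
    have "(\<Sum>i<n. (cmod (z i + c i))\<^sup>2) \<le> R\<^sup>2"
      using \<open>x \<in> K\<close> K[of z] z by (simp add: n_def)
    then have "\<zeta> \<in> cunit_ball n"
      using R by (simp add: cunit_ball_def cspace_def \<zeta>_def norm_divide power_divide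
        flip: sum_divide_distrib)
    moreover have "clin_comb n v (\<lambda>i. of_real R * \<zeta> i - c i) = clin_comb n v z"
      by (rule clin_comb_cong) (use R in \<open>simp add: \<zeta>_def\<close>)
    then have "f \<zeta> = x" unfolding f_def z by simp
    ultimately show "x \<in> f ` cunit_ball n" by blast
  next
    fix x assume "x \<in> f ` cunit_ball n"
    then obtain \<zeta> where \<zeta>: "\<zeta> \<in> cunit_ball n" "x = f \<zeta>" by blast
    have "(\<Sum>i<n. (cmod (of_real R * \<zeta> i - c i + c i))\<^sup>2) = R\<^sup>2 * (\<Sum>i<n. (cmod (\<zeta> i))\<^sup>2)"
      using R by (simp add: norm_mult power_mult_distrib sum_distrib_left)
    also have "\<dots> \<le> R\<^sup>2" using \<zeta>(1) by (simp add: cunit_ball_def mult_left_le)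
    finally show "x \<in> K" using K \<zeta>(2) unfolding f_def n_def by blast
  qed
  ultimately show ?thesis
    unfolding complex_ellipsoid_def complex_ellipsoid_in_def Let_def n_def[symmetric] f_affine
    by blast
qed

lemma ellipsoid_map_basis:
  fixes v w :: "nat \<Rightarrow> complex^'n"
  assumes ind: "clin_indep k v"
    and inj: "inj_on (\<lambda>z. a + clin_comb k w z) (cspace k)"
    and sub: "(\<lambda>z. a + clin_comb k w z) ` cspace k \<subseteq> {p + clin_comb k v z | z. True}"
  shows "clin_indep k w" and "vec.span (w ` {..<k}) = vec.span (v ` {..<k})"
proof -
  show indw: "clin_indep k w"
    unfolding clin_indep_def
  proof (intro allI impI)
    fix z i assume z: "clin_comb k w z = 0" and i: "i < k"
    have "(\<lambda>i. if i < k then z i else 0) = (\<lambda>i. 0)"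
      using inj_onD[OF inj, of "\<lambda>i. if i < k then z i else 0" "\<lambda>i. 0"] z
      by (simp add: clin_comb_restrict cspace_def)
    then show "z i = 0" using i by (metis (mono_tags))
  qed
  have on_plane: "\<exists>z'. a + clin_comb k w z = p + clin_comb k v z'" if "z \<in> cspace k" for z
    using sub that by blast
  obtain za where za: "a = p + clin_comb k v za"
    using on_plane[of "\<lambda>i. 0"] by (auto simp: cspace_def)
  have "w i \<in> vec.span (v ` {..<k})" if i: "i < k" for i
  proof -
    obtain z1 where "a + clin_comb k w (\<lambda>l. if l = i then 1 else 0) = p + clin_comb k v z1"
      using on_plane[of "\<lambda>l. if l = i then 1 else 0"] i by (auto simp: cspace_def)
    then have "w i = clin_comb k v z1 - clin_comb k v za"
      using clin_comb_unit[OF i, of w] za by (simp add: algebra_simps)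
    then show ?thesis using clin_comb_in_span vec.span_diff by metis
  qed
  then have wv: "w ` {..<k} \<subseteq> vec.span (v ` {..<k})" by auto
  then have "vec.span (v ` {..<k}) \<subseteq> vec.span (w ` {..<k})"
    using vec.card_eq_dim[OF wv] indw ind dim_span_clin_indep[OF ind]
    by (simp add: clin_indep_iff_independent card_image)
  moreover have "vec.span (w ` {..<k}) \<subseteq> vec.span (v ` {..<k})"
    using vec.span_mono[OF wv] by (simp only: vec.span_span)
  ultimately show "vec.span (w ` {..<k}) = vec.span (v ` {..<k})" by blast
qed

lemma interior_point_inside_unit_ball:
  assumes p0: "p0 \<in> interior K"
    and K: "\<And>\<zeta>. p0 + clin_comb k w \<zeta> \<in> K \<longleftrightarrow> (\<Sum>j<k. (cmod (\<beta> j + \<zeta> j))\<^sup>2) \<le> 1"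
  shows "(\<Sum>j<k. (cmod (\<beta> j))\<^sup>2) < 1"
proof (rule ccontr)
  assume "\<not> ?thesis"
  then have ge: "1 \<le> (\<Sum>j<k. (cmod (\<beta> j))\<^sup>2)" by simp
  obtain e where e: "e > 0" "ball p0 e \<subseteq> K" using p0 by (meson mem_interior)
  define d where "d = clin_comb k w \<beta>"
  define t where "t = e / (2 * (norm d + 1))"
  have nd: "0 < 2 * (norm d + 1)" by (simp add: add_nonneg_pos)
  then have t: "t > 0" unfolding t_def using e by simp
  have "t * norm d \<le> t * (norm d + 1)" using t by simp
  also have "\<dots> = e / 2" using nd unfolding t_def by (simp add: field_simps)
  also have "\<dots> < e" using e by simp
  finally have "p0 + t *\<^sub>R d \<in> K" using e(2) t by (auto simp: dist_norm)
  moreover have "t *\<^sub>R d = clin_comb k w (\<lambda>j. of_real t * \<beta> j)"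
    unfolding clin_comb_scale d_def by (simp add: vec_eq_iff scaleR_conv_of_real[where 'a=complex])
  ultimately have "(\<Sum>j<k. (cmod (\<beta> j + of_real t * \<beta> j))\<^sup>2) \<le> 1" using K by simp
  moreover have "(\<Sum>j<k. (cmod (\<beta> j + of_real t * \<beta> j))\<^sup>2) = (1 + t)\<^sup>2 * (\<Sum>j<k. (cmod (\<beta> j))\<^sup>2)"
  proof -
    have "\<beta> j + of_real t * \<beta> j = of_real (1 + t) * \<beta> j" for j by (simp add: algebra_simps)
    then show ?thesis using t
      by (simp add: norm_mult power_mult_distrib sum_distrib_left del: of_real_add)
  qed
  moreover have "1 < (1 + t)\<^sup>2" using t by (simp add: power2_eq_square algebra_simps add_pos_pos)
  ultimately show False using ge mult_left_mono[OF ge, of "(1 + t)\<^sup>2"] by simp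
qed

lemma ellipsoid_section_coords:
  fixes K :: "(complex^'n) set"
  assumes p0: "p0 \<in> interior K" and ind: "clin_indep k v"
    and ell: "complex_ellipsoid_in k {p0 + clin_comb k v z | z. True}
                ({p0 + clin_comb k v z | z. True} \<inter> K)"
  obtains w \<beta> where "clin_indep k w" "vec.span (w ` {..<k}) = vec.span (v ` {..<k})"
    "(\<Sum>j<k. (cmod (\<beta> j))\<^sup>2) < 1"
    "\<And>\<zeta>. p0 + clin_comb k w \<zeta> \<in> K \<longleftrightarrow> (\<Sum>j<k. (cmod (\<beta> j + \<zeta> j))\<^sup>2) \<le> 1"
proof -
  define P where "P = {p0 + clin_comb k v z | z. True}"
  obtain a w where inj: "inj_on (\<lambda>z. a + clin_comb k w z) (cspace k)"
    and sub: "(\<lambda>z. a + clin_comb k w z) ` cspace k \<subseteq> P"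
    and PK: "P \<inter> K = (\<lambda>z. a + clin_comb k w z) ` cunit_ball k"
    using ell unfolding complex_ellipsoid_in_def P_def[symmetric] Let_def by blast
  have ball_cs: "cunit_ball k \<subseteq> cspace k" by (auto simp: cunit_ball_def)
  have "p0 = p0 + clin_comb k v (\<lambda>i. 0)" by simp
  then have "p0 \<in> P \<inter> K"
    using interior_subset[of K] p0 unfolding P_def by blast
  then obtain \<beta> where \<beta>: "\<beta> \<in> cunit_ball k" "p0 = a + clin_comb k w \<beta>"
    using PK by blast
  have K: "p0 + clin_comb k w \<zeta> \<in> K \<longleftrightarrow> (\<Sum>j<k. (cmod (\<beta> j + \<zeta> j))\<^sup>2) \<le> 1" for \<zeta>
  proof -
    define \<gamma> where "\<gamma> = (\<lambda>i. if i < k then \<beta> i + \<zeta> i else 0)"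
    have \<gamma>: "\<gamma> \<in> cspace k" by (simp add: cspace_def \<gamma>_def)
    have eq: "p0 + clin_comb k w \<zeta> = a + clin_comb k w \<gamma>"
      unfolding \<beta>(2) \<gamma>_def clin_comb_restrict clin_comb_add by (simp add: add.assoc)
    have "a + clin_comb k w \<gamma> \<in> K \<longleftrightarrow> a + clin_comb k w \<gamma> \<in> (\<lambda>z. a + clin_comb k w z) ` cunit_ball k"
      using sub \<gamma> PK by blast
    also have "\<dots> \<longleftrightarrow> \<gamma> \<in> cunit_ball k"
      using inj_on_image_mem_iff[OF inj \<gamma> ball_cs] .
    also have "\<dots> \<longleftrightarrow> (\<Sum>j<k. (cmod (\<beta> j + \<zeta> j))\<^sup>2) \<le> 1"
      using \<gamma> by (simp add: cunit_ball_def \<gamma>_def)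
    finally show ?thesis unfolding eq .
  qed
  show ?thesis
    using that ellipsoid_map_basis[OF ind inj sub[unfolded P_def]] interior_point_inside_unit_ball[OF p0 K] K
    by blast
qed

section \<open>Radial coefficients of a body\<close>

lemma cmod_add_of_real_mult_power2:
  "(cmod (b + of_real t * z))\<^sup>2 = (cmod b)\<^sup>2 + 2 * t * Re (z * cnj b) + t\<^sup>2 * (cmod z)\<^sup>2"
  unfolding cmod_power2 by (simp add: power2_eq_square algebra_simps)

lemma quadratic_sublevel_eq_Icc:
  fixes A B :: real
  assumes A: "0 < A"
  shows "{t. A * t\<^sup>2 + 2 * B * t \<le> 1} = {(- B - sqrt (B\<^sup>2 + A)) / A .. (- B + sqrt (B\<^sup>2 + A)) / A}"
proof -
  define s where "s = sqrt (B\<^sup>2 + A)"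
  have "0 \<le> B\<^sup>2 + A" using A by (simp add: add_nonneg_pos)
  then have s2: "s\<^sup>2 = B\<^sup>2 + A" and s0: "0 \<le> s" by (simp_all add: s_def)
  define r1 where "r1 = (- B - s) / A"
  define r2 where "r2 = (- B + s) / A"
  have factor: "A * t\<^sup>2 + 2 * B * t - 1 = A * ((t - r1) * (t - r2))" for t
    unfolding r1_def r2_def using A s2 by (simp add: field_simps power2_eq_square)
  have "r1 \<le> r2" unfolding r1_def r2_def using A s0 by (simp add: divide_right_mono)
  have sublevel: "A * t\<^sup>2 + 2 * B * t \<le> 1 \<longleftrightarrow> r1 \<le> t \<and> t \<le> r2" for t
  proof -
    have "A * t\<^sup>2 + 2 * B * t \<le> 1 \<longleftrightarrow> A * ((t - r1) * (t - r2)) \<le> A * 0"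
      using factor[of t] by (simp only: mult_zero_right) linarith
    also have "\<dots> \<longleftrightarrow> (t - r1) * (t - r2) \<le> 0"
      using A by (rule mult_le_cancel_left_pos)
    also have "\<dots> \<longleftrightarrow> r1 \<le> t \<and> t \<le> r2"
      using \<open>r1 \<le> r2\<close> by (auto simp: mult_le_0_iff)
    finally show ?thesis .
  qed
  have "{t. A * t\<^sup>2 + 2 * B * t \<le> 1} = {r1 .. r2}"
    unfolding set_eq_iff atLeastAtMost_iff mem_Collect_eq using sublevel by blast
  then show ?thesis unfolding r1_def r2_def s_def .
qed

lemma quadratic_sublevel_unique:
  fixes A B A' B' :: real
  assumes A: "0 < A" and A': "0 < A'"
    and eq: "\<And>t. A * t\<^sup>2 + 2 * B * t \<le> 1 \<longleftrightarrow> A' * t\<^sup>2 + 2 * B' * t \<le> 1"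
  shows "A = A'" and "B = B'"
proof -
  define r1 where "r1 = (\<lambda>a b::real. (- b - sqrt (b\<^sup>2 + a)) / a)"
  define r2 where "r2 = (\<lambda>a b::real. (- b + sqrt (b\<^sup>2 + a)) / a)"
  have vieta: "r1 a b * r2 a b = - 1 / a" "r1 a b + r2 a b = - 2 * b / a" if "0 < a" for a b :: real
  proof -
    have "(sqrt (b\<^sup>2 + a))\<^sup>2 = b\<^sup>2 + a" using that by (simp add: add_nonneg_pos)
    then show "r1 a b * r2 a b = - 1 / a" "r1 a b + r2 a b = - 2 * b / a"
      using that by (simp_all add: r1_def r2_def field_simps power2_eq_square)
  qed
  have "r1 A B \<le> r2 A B" using A by (simp add: r1_def r2_def divide_right_mono)
  have "{r1 A B .. r2 A B} = {t. A * t\<^sup>2 + 2 * B * t \<le> 1}"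
    unfolding r1_def r2_def by (rule quadratic_sublevel_eq_Icc[OF A, symmetric])
  also have "\<dots> = {t. A' * t\<^sup>2 + 2 * B' * t \<le> 1}" using eq by blast
  also have "\<dots> = {r1 A' B' .. r2 A' B'}"
    unfolding r1_def r2_def by (rule quadratic_sublevel_eq_Icc[OF A'])
  finally have "r1 A B = r1 A' B'" "r2 A B = r2 A' B'"
    using \<open>r1 A B \<le> r2 A B\<close> by (auto simp: Icc_eq_Icc)
  then have "- 1 / A = - 1 / A'" and sum: "- 2 * B / A = - 2 * B' / A'"
    using vieta[OF A, of B] vieta[OF A', of B'] by simp_all
  then show "A = A'" by simp
  with sum A show "B = B'" by (simp add: field_simps)
qed

definition line_quadratic :: "(complex^'n) set \<Rightarrow> complex^'n \<Rightarrow> complex^'n \<Rightarrow> real \<Rightarrow> real \<Rightarrow> bool" where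
  "line_quadratic K p x A B \<longleftrightarrow> 0 < A \<and> (\<forall>t::real. p + of_real t *s x \<in> K \<longleftrightarrow> A * t\<^sup>2 + 2 * B * t \<le> 1)"

definition line_coeffs :: "(complex^'n) set \<Rightarrow> complex^'n \<Rightarrow> complex^'n \<Rightarrow> real \<times> real" where
  "line_coeffs K p x = (if x = 0 then (0, 0) else SOME (A, B). line_quadratic K p x A B)"

definition radial_quad :: "(complex^'n) set \<Rightarrow> complex^'n \<Rightarrow> complex^'n \<Rightarrow> real" where
  "radial_quad K p x = fst (line_coeffs K p x)"

definition radial_lin :: "(complex^'n) set \<Rightarrow> complex^'n \<Rightarrow> complex^'n \<Rightarrow> real" where
  "radial_lin K p x = snd (line_coeffs K p x)"

lemma radial_coeffs_zero [simp]: "radial_quad K p 0 = 0" "radial_lin K p 0 = 0"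
  by (simp_all add: radial_quad_def radial_lin_def line_coeffs_def)

lemma radial_coeffs_eq:
  assumes "x \<noteq> 0" and "line_quadratic K p x A B"
  shows "radial_quad K p x = A" and "radial_lin K p x = B"
proof -
  have "line_quadratic K p x (radial_quad K p x) (radial_lin K p x)"
    using someI[of "\<lambda>(A, B). line_quadratic K p x A B" "(A, B)"] assms
    by (simp add: radial_quad_def radial_lin_def line_coeffs_def case_prod_beta)
  with assms(2) have "0 < radial_quad K p x" "0 < A"
    and "\<And>t. radial_quad K p x * t\<^sup>2 + 2 * radial_lin K p x * t \<le> 1 \<longleftrightarrow> A * t\<^sup>2 + 2 * B * t \<le> 1"
    unfolding line_quadratic_def by auto
  then show "radial_quad K p x = A" "radial_lin K p x = B" by (rule quadratic_sublevel_unique)+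
qed

lemma line_quadratic_in_ball_coords:
  assumes K: "\<And>\<zeta>. p0 + clin_comb k w \<zeta> \<in> K \<longleftrightarrow> (\<Sum>j<k. (cmod (\<beta> j + \<zeta> j))\<^sup>2) \<le> 1"
    and D: "D = 1 - (\<Sum>j<k. (cmod (\<beta> j))\<^sup>2)" "0 < D"
    and \<zeta>: "j < k" "\<zeta> j \<noteq> 0"
  shows "line_quadratic K p0 (clin_comb k w \<zeta>)
           ((\<Sum>j<k. (cmod (\<zeta> j))\<^sup>2) / D) (Re (\<Sum>j<k. \<zeta> j * cnj (\<beta> j)) / D)"
proof -
  define S where "S = (\<Sum>j<k. (cmod (\<zeta> j))\<^sup>2)"
  define R where "R = Re (\<Sum>j<k. \<zeta> j * cnj (\<beta> j))"
  have "0 < S" unfolding S_def using \<zeta> by (intro sum_pos2[of _ j]) auto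
  moreover have "p0 + of_real t *s clin_comb k w \<zeta> \<in> K \<longleftrightarrow> S / D * t\<^sup>2 + 2 * (R / D) * t \<le> 1"
    for t :: real
  proof -
    have "(\<Sum>j<k. (cmod (\<beta> j + of_real t * \<zeta> j))\<^sup>2)
        = (\<Sum>j<k. (cmod (\<beta> j))\<^sup>2) + 2 * t * R + t\<^sup>2 * S"
      unfolding cmod_add_of_real_mult_power2 sum.distrib S_def R_def Re_sum
      by (simp only: sum_distrib_left)
    also have "\<dots> = (1 - D) + 2 * t * R + t\<^sup>2 * S" using D(1) by simp
    finally have "(\<Sum>j<k. (cmod (\<beta> j + of_real t * \<zeta> j))\<^sup>2) = (1 - D) + 2 * t * R + t\<^sup>2 * S" .
    then have "p0 + of_real t *s clin_comb k w \<zeta> \<in> K \<longleftrightarrow> S * t\<^sup>2 + 2 * R * t \<le> D"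
      using K[of "\<lambda>j. of_real t * \<zeta> j"] by (simp add: clin_comb_scale algebra_simps) linarith
    also have "\<dots> \<longleftrightarrow> (S * t\<^sup>2 + 2 * R * t) / D \<le> 1"
      using D(2) by (simp add: pos_divide_le_eq)
    also have "(S * t\<^sup>2 + 2 * R * t) / D = S / D * t\<^sup>2 + 2 * (R / D) * t"
      using D(2) by (simp add: field_simps)
    finally show ?thesis .
  qed
  ultimately have "line_quadratic K p0 (clin_comb k w \<zeta>) (S / D) (R / D)"
    unfolding line_quadratic_def using D(2) by simp
  then show ?thesis by (simp only: S_def R_def)
qed

lemma radial_coeffs_in_ball_coords:
  assumes ind: "clin_indep k w"
    and K: "\<And>\<zeta>. p0 + clin_comb k w \<zeta> \<in> K \<longleftrightarrow> (\<Sum>j<k. (cmod (\<beta> j + \<zeta> j))\<^sup>2) \<le> 1"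
    and D: "D = 1 - (\<Sum>j<k. (cmod (\<beta> j))\<^sup>2)" "0 < D"
  shows "radial_quad K p0 (clin_comb k w \<zeta>) = (\<Sum>j<k. (cmod (\<zeta> j))\<^sup>2) / D"
    and "radial_lin K p0 (clin_comb k w \<zeta>) = Re (\<Sum>j<k. \<zeta> j * cnj (\<beta> j)) / D"
proof -
  have "radial_quad K p0 (clin_comb k w \<zeta>) = (\<Sum>j<k. (cmod (\<zeta> j))\<^sup>2) / D \<and>
        radial_lin K p0 (clin_comb k w \<zeta>) = Re (\<Sum>j<k. \<zeta> j * cnj (\<beta> j)) / D"
  proof (cases "\<exists>j<k. \<zeta> j \<noteq> 0")
    case True
    then obtain j where j: "j < k" "\<zeta> j \<noteq> 0" by blast
    have "clin_comb k w \<zeta> \<noteq> 0"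
      using ind[unfolded clin_indep_def, rule_format, of \<zeta> j] j by auto
    with line_quadratic_in_ball_coords[where \<zeta>=\<zeta>, OF K D j] show ?thesis
      by (simp add: radial_coeffs_eq)
  next
    case False
    then have "clin_comb k w \<zeta> = clin_comb k w (\<lambda>j. 0)" by (intro clin_comb_cong) blast
    then have "clin_comb k w \<zeta> = 0" by simp
    moreover have "(\<Sum>j<k. (cmod (\<zeta> j))\<^sup>2) = 0" "(\<Sum>j<k. \<zeta> j * cnj (\<beta> j)) = 0"
      using False by simp_all
    ultimately show ?thesis by simp
  qed
  then show "radial_quad K p0 (clin_comb k w \<zeta>) = (\<Sum>j<k. (cmod (\<zeta> j))\<^sup>2) / D"
    and "radial_lin K p0 (clin_comb k w \<zeta>) = Re (\<Sum>j<k. \<zeta> j * cnj (\<beta> j)) / D" by simp_all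
qed

section \<open>Bodies with ellipsoidal sections\<close>

locale ellipsoidal_sections =
  fixes K :: "(complex^'n) set" and p0 :: "complex^'n" and k :: nat
  assumes two_le_k: "2 \<le> k" and k_less: "k < CARD('n)" and p0: "p0 \<in> interior K"
    and sections: "\<And>P. complex_affine_subspace_through k p0 P \<Longrightarrow> complex_ellipsoid_in k P (P \<inter> K)"
begin

lemma ball_coords_of_plane:
  obtains w \<beta> \<zeta>x \<zeta>y where "clin_indep k w" "0 < 1 - (\<Sum>j<k. (cmod (\<beta> j))\<^sup>2)"
    "\<And>\<zeta>. p0 + clin_comb k w \<zeta> \<in> K \<longleftrightarrow> (\<Sum>j<k. (cmod (\<beta> j + \<zeta> j))\<^sup>2) \<le> 1"
    "x = clin_comb k w \<zeta>x" "y = clin_comb k w \<zeta>y"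
proof -
  obtain v where v: "clin_indep k v" "x \<in> vec.span (v ` {..<k})" "y \<in> vec.span (v ` {..<k})"
    using plane_through_two_vectors[of k x y] two_le_k k_less by auto
  have plane: "complex_affine_subspace_through k p0 {p0 + clin_comb k v z | z. True}"
    unfolding complex_affine_subspace_through_def using v(1) by blast
  obtain w \<beta> where w: "clin_indep k w" "vec.span (w ` {..<k}) = vec.span (v ` {..<k})"
    "(\<Sum>j<k. (cmod (\<beta> j))\<^sup>2) < 1"
    "\<And>\<zeta>. p0 + clin_comb k w \<zeta> \<in> K \<longleftrightarrow> (\<Sum>j<k. (cmod (\<beta> j + \<zeta> j))\<^sup>2) \<le> 1"
    by (rule ellipsoid_section_coords[OF p0 v(1) sections[OF plane]]) fast
  obtain \<zeta>x \<zeta>y where "x = clin_comb k w \<zeta>x" "y = clin_comb k w \<zeta>y"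
    using span_imp_clin_comb[OF clin_indep_inj_on[OF w(1)]] v(2,3) w(2) by metis
  with w show ?thesis using that by simp
qed

lemma radial_coeffs_on_plane:
  obtains D \<zeta>x \<zeta>y c where "0 < D"
    "\<And>\<alpha> \<beta>. radial_quad K p0 (\<alpha> *s x + \<beta> *s y) = (\<Sum>j<k. (cmod (\<alpha> * \<zeta>x j + \<beta> * \<zeta>y j))\<^sup>2) / D"
    "\<And>\<alpha> \<beta>. radial_lin K p0 (\<alpha> *s x + \<beta> *s y)
       = Re (\<Sum>j<k. (\<alpha> * \<zeta>x j + \<beta> * \<zeta>y j) * cnj (c j)) / D"
proof -
  obtain w c \<zeta>x \<zeta>y where w: "clin_indep k w" "0 < 1 - (\<Sum>j<k. (cmod (c j))\<^sup>2)"
    "\<And>\<zeta>. p0 + clin_comb k w \<zeta> \<in> K \<longleftrightarrow> (\<Sum>j<k. (cmod (c j + \<zeta> j))\<^sup>2) \<le> 1"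
    and xy: "x = clin_comb k w \<zeta>x" "y = clin_comb k w \<zeta>y"
    by (rule ball_coords_of_plane[of x y]) fast
  have comb: "\<alpha> *s x + \<beta> *s y = clin_comb k w (\<lambda>j. \<alpha> * \<zeta>x j + \<beta> * \<zeta>y j)" for \<alpha> \<beta>
    unfolding xy clin_comb_add clin_comb_scale ..
  show ?thesis
    by (rule that[OF w(2)])
      (simp_all only: comb radial_coeffs_in_ball_coords[OF w(1) w(3) refl w(2)])
qed

lemma radial_quad_planewise:
  "\<exists>(N::nat) p r. \<forall>\<alpha> \<beta>. radial_quad K p0 (\<alpha> *s x + \<beta> *s y) = (\<Sum>j<N. (cmod (\<alpha> * p j + \<beta> * r j))\<^sup>2)"
proof -
  obtain D \<zeta>x \<zeta>y c where D: "0 < D"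
    and q: "\<And>\<alpha> \<beta>. radial_quad K p0 (\<alpha> *s x + \<beta> *s y) = (\<Sum>j<k. (cmod (\<alpha> * \<zeta>x j + \<beta> * \<zeta>y j))\<^sup>2) / D"
    by (rule radial_coeffs_on_plane[of x y]) fast
  define s where "s = (of_real (sqrt D) :: complex)"
  have "(cmod s)\<^sup>2 = D" using D by (simp add: s_def)
  have "(cmod (\<alpha> * (\<zeta>x j / s) + \<beta> * (\<zeta>y j / s)))\<^sup>2 = (cmod (\<alpha> * \<zeta>x j + \<beta> * \<zeta>y j))\<^sup>2 / D"
    for \<alpha> \<beta> j
  proof -
    have "\<alpha> * (\<zeta>x j / s) + \<beta> * (\<zeta>y j / s) = (\<alpha> * \<zeta>x j + \<beta> * \<zeta>y j) / s"
      by (simp add: add_divide_distrib)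
    then show ?thesis by (simp add: norm_divide power_divide \<open>(cmod s)\<^sup>2 = D\<close>)
  qed
  then have "radial_quad K p0 (\<alpha> *s x + \<beta> *s y) = (\<Sum>j<k. (cmod (\<alpha> * (\<zeta>x j / s) + \<beta> * (\<zeta>y j / s)))\<^sup>2)"
    for \<alpha> \<beta>
    unfolding q by (simp add: sum_divide_distrib)
  then show ?thesis
    by (intro exI[of _ k] exI[of _ "\<lambda>j. \<zeta>x j / s"] exI[of _ "\<lambda>j. \<zeta>y j / s"] allI)
qed

lemma radial_lin_planewise: "\<exists>a b. \<forall>\<alpha> \<beta>. radial_lin K p0 (\<alpha> *s x + \<beta> *s y) = Re (\<alpha> * a + \<beta> * b)"
proof -
  obtain D \<zeta>x \<zeta>y c where
    l: "\<And>\<alpha> \<beta>. radial_lin K p0 (\<alpha> *s x + \<beta> *s y) = Re (\<Sum>j<k. (\<alpha> * \<zeta>x j + \<beta> * \<zeta>y j) * cnj (c j)) / D"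
    by (rule radial_coeffs_on_plane[of x y]) fast
  have "radial_lin K p0 (\<alpha> *s x + \<beta> *s y) = Re (\<alpha> * ((\<Sum>j<k. \<zeta>x j * cnj (c j)) / of_real D)
      + \<beta> * ((\<Sum>j<k. \<zeta>y j * cnj (c j)) / of_real D))" for \<alpha> \<beta>
    unfolding l by (simp add: sum.distrib sum_distrib_left algebra_simps flip: add_divide_distrib Re_divide_of_real)
  then show ?thesis by blast
qed

lemma line_quadratic_radial:
  assumes "x \<noteq> 0"
  shows "line_quadratic K p0 x (radial_quad K p0 x) (radial_lin K p0 x)"
proof -
  obtain w \<beta> \<zeta> where w: "clin_indep k w" "0 < 1 - (\<Sum>j<k. (cmod (\<beta> j))\<^sup>2)"
    "\<And>\<zeta>. p0 + clin_comb k w \<zeta> \<in> K \<longleftrightarrow> (\<Sum>j<k. (cmod (\<beta> j + \<zeta> j))\<^sup>2) \<le> 1"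
    and x: "x = clin_comb k w \<zeta>"
    by (rule ball_coords_of_plane[of x x]) fast
  obtain j where j: "j < k" "\<zeta> j \<noteq> 0"
    using assms clin_comb_cong[of k \<zeta> "\<lambda>j. 0" w] unfolding x by auto
  have "line_quadratic K p0 x ((\<Sum>j<k. (cmod (\<zeta> j))\<^sup>2) / (1 - (\<Sum>j<k. (cmod (\<beta> j))\<^sup>2)))
      (Re (\<Sum>j<k. \<zeta> j * cnj (\<beta> j)) / (1 - (\<Sum>j<k. (cmod (\<beta> j))\<^sup>2)))"
    unfolding x by (rule line_quadratic_in_ball_coords[where \<zeta>=\<zeta>, OF w(3) refl w(2) j])
  with radial_coeffs_eq[OF assms this] show ?thesis by simp
qed

sublocale radial: positive_planewise_hermitian "radial_quad K p0"
  by unfold_locales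
    (use radial_quad_planewise line_quadratic_radial in \<open>auto simp: line_quadratic_def\<close>)

lemma mem_iff_radial_coeffs: "p0 + x \<in> K \<longleftrightarrow> radial_quad K p0 x + 2 * radial_lin K p0 x \<le> 1"
proof (cases "x = 0")
  case True
  then show ?thesis using p0 interior_subset by auto
next
  case False
  then have "p0 + of_real 1 *s x \<in> K \<longleftrightarrow> radial_quad K p0 x * 1\<^sup>2 + 2 * radial_lin K p0 x * 1 \<le> 1"
    using line_quadratic_radial unfolding line_quadratic_def by blast
  then show ?thesis by simp
qed

lemma complex_ellipsoid: "complex_ellipsoid K"
proof -
  obtain v :: "nat \<Rightarrow> complex^'n" where v: "clin_indep CARD('n) v"
    and q: "\<And>z. radial_quad K p0 (clin_comb CARD('n) v z) = (\<Sum>i<CARD('n). (cmod (z i))\<^sup>2)"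
    by (rule radial.orthonormal_basis) fast
  obtain c where l: "\<And>z. radial_lin K p0 (clin_comb CARD('n) v z) = (\<Sum>i<CARD('n). Re (z i * cnj (c i)))"
    using planewise_real_linear_clin_comb[OF radial_lin_planewise] by blast
  define R where "R = sqrt (1 + (\<Sum>i<CARD('n). (cmod (c i))\<^sup>2))"
  have "0 \<le> (\<Sum>i<CARD('n). (cmod (c i))\<^sup>2)" by (simp add: sum_nonneg)
  then have R: "0 < R" "R\<^sup>2 = 1 + (\<Sum>i<CARD('n). (cmod (c i))\<^sup>2)" by (simp_all add: R_def)
  have "p0 + clin_comb CARD('n) v z \<in> K \<longleftrightarrow> (\<Sum>i<CARD('n). (cmod (z i + c i))\<^sup>2) \<le> R\<^sup>2" for z
  proof -
    have "(cmod (z i + c i))\<^sup>2 = (cmod (c i))\<^sup>2 + 2 * Re (z i * cnj (c i)) + (cmod (z i))\<^sup>2" for i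
      using cmod_add_of_real_mult_power2[of "c i" 1 "z i"] by (simp add: add.commute)
    then show ?thesis
      unfolding mem_iff_radial_coeffs q l R(2) by (simp add: sum.distrib sum_distrib_left add_ac)
  qed
  with v R(1) show ?thesis by (rule complex_ellipsoid_if_ball_in_coords)
qed

end

theorem theorem4p1:
  fixes K :: "(complex^'n) set" and p0 :: "complex^'n" and k :: nat
  assumes "2 \<le> k" and "k < CARD('n)"
    and "convex_body K"
    and "p0 \<in> interior K"
    and "\<And>P. complex_affine_subspace_through k p0 P \<Longrightarrow> complex_ellipsoid_in k P (P \<inter> K)"
  shows "complex_ellipsoid K"
proof -
  interpret ellipsoidal_sections K p0 k
    using assms(1,2,4,5) by unfold_locales
  show ?thesis by (rule complex_ellipsoid)
qed

end
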